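(* Assume Hypothesis (H), and let $(x_k)_{k\geq0}$ be the Newton iterates $F'_{x_k}(x_{k+1}-x_k)=-F(x_k)$ with $x_0=0$. Define recursively $\xi_0=0$, $\tilde M_0=M$, $\tilde a_0=a$, and for $k\geq 0$: $$w_k=\tilde M_k^{-1}\tilde a_k,\quad \xi_{k+1}=\xi_k+w_k,\quad \tilde a_{k+1}=b(w_k,w_k),\quad \tilde M_{k+1}=\tilde M_k-b(w_k,\cdot)-b(\cdot,w_k).$$ Then for every $k\geq 0$, $\tilde M_k$ is nonsingular and $\xi_k=x_k$, $\tilde M_k=F'_{x_k}$, $\tilde a_k=-F(x_k)$, and $w_k=x_{k+1}-x_k$.
   Context: Inequalities between vectors/matrices are componentwise. An M-matrix is a matrix $sI-P$ with $P\geq0$ entrywise and $s\geq\rho(P)$ ($\rho$ = spectral radius). Let $M\in\mathbb R^{n\times n}$ be a nonsingular M-matrix, $a\in\mathbb R^n$ with $a\geq 0$, and $b:\mathbb R^n\times\mathbb R^n\to\mathbb R^n$ a bilinear map (not necessarily symmetric) with $b(x,y)\geq 0$ whenever $x,y\geq 0$. A solution of $Mx=a+b(x,x)$ means a vector $x\geq 0$ satisfying it; a solution $x_\ast$ is minimal if $x_\ast\leq y$ for every solution $y$. $F(x):=Mx-a-b(x,x)$. For $x\in\mathbb R^n$, $b(x,\cdot)$ and $b(\cdot,x)$ denote the $n\times n$ matrices of $y\mapsto b(x,y)$ and $y\mapsto b(y,x)$; $F'_x:=M-b(x,\cdot)-b(\cdot,x)$. Hypothesis (H): the equation has a minimal solution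 $x_\ast$, $x_\ast>0$ (all components strictly positive), and either $F'_{x_\ast}$ is nonsingular, or $F'_{x_\ast}$ is irreducible and $F'_x\neq F'_{x_\ast}$ for every $x$ with $0\leq x\leq x_\ast$, $x\neq x_\ast$. *)

theory Defs
  imports "HOL-Analysis.Analysis"
begin

definition vnonneg :: "real^'n \<Rightarrow> bool" where
  "vnonneg x \<longleftrightarrow> (\<forall>i. 0 \<le> x $ i)"

definition vle :: "real^'n \<Rightarrow> real^'n \<Rightarrow> bool" where
  "vle x y \<longleftrightarrow> (\<forall>i. x $ i \<le> y $ i)"

definition vpos :: "real^'n \<Rightarrow> bool" where
  "vpos x \<longleftrightarrow> (\<forall>i. 0 < x $ i)"

definition mnonneg :: "real^'n^'n \<Rightarrow> bool" where
  "mnonneg P \<longleftrightarrow> (\<forall>i j. 0 \<le> P $ i $ j)"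

definition spectral_radius :: "real^'n^'n \<Rightarrow> real" where
  "spectral_radius P = Sup {cmod l | l. \<exists>v :: complex^'n. v \<noteq> 0 \<and>
      (\<chi> i j. complex_of_real (P $ i $ j)) *v v = l *s v}"

definition M_matrix :: "real^'n^'n \<Rightarrow> bool" where
  "M_matrix A \<longleftrightarrow> (\<exists>s P. mnonneg P \<and> spectral_radius P \<le> s \<and> A = s *\<^sub>R mat 1 - P)"

text \<open>Irreducible: no nonempty proper index set I with A i j = 0 for i in I, j not in I
  (i.e. A is not permutation-similar to a block upper triangular matrix).\<close>
definition irreducible_mat :: "real^'n^'n \<Rightarrow> bool" where
  "irreducible_mat A \<longleftrightarrow>
     \<not> (\<exists>I. I \<noteq> {} \<and> I \<noteq> UNIV \<and> (\<forall>i\<in>I. \<forall>j. j \<notin> I \<longrightarrow> A $ i $ j = 0))"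

definition Fmap :: "real^'n^'n \<Rightarrow> real^'n \<Rightarrow> (real^'n \<Rightarrow> real^'n \<Rightarrow> real^'n) \<Rightarrow> real^'n \<Rightarrow> real^'n" where
  "Fmap M a b x = M *v x - a - b x x"

definition Fderiv :: "real^'n^'n \<Rightarrow> (real^'n \<Rightarrow> real^'n \<Rightarrow> real^'n) \<Rightarrow> real^'n \<Rightarrow> real^'n^'n" where
  "Fderiv M b x = M - matrix (b x) - matrix (\<lambda>y. b y x)"

definition is_solution :: "real^'n^'n \<Rightarrow> real^'n \<Rightarrow> (real^'n \<Rightarrow> real^'n \<Rightarrow> real^'n) \<Rightarrow> real^'n \<Rightarrow> bool" where
  "is_solution M a b x \<longleftrightarrow> vnonneg x \<and> M *v x = a + b x x"

definition is_minimal_solution :: "real^'n^'n \<Rightarrow> real^'n \<Rightarrow> (real^'n \<Rightarrow> real^'n \<Rightarrow> real^'n) \<Rightarrow> real^'n \<Rightarrow> bool" where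
  "is_minimal_solution M a b x \<longleftrightarrow> is_solution M a b x \<and> (\<forall>y. is_solution M a b y \<longrightarrow> vle x y)"

definition hypH :: "real^'n^'n \<Rightarrow> real^'n \<Rightarrow> (real^'n \<Rightarrow> real^'n \<Rightarrow> real^'n) \<Rightarrow> bool" where
  "hypH M a b \<longleftrightarrow> (\<exists>xs. is_minimal_solution M a b xs \<and> vpos xs \<and>
      (invertible (Fderiv M b xs) \<or>
       (irreducible_mat (Fderiv M b xs) \<and>
        (\<forall>x. vnonneg x \<and> vle x xs \<and> x \<noteq> xs \<longrightarrow> Fderiv M b x \<noteq> Fderiv M b xs))))"

end

theory Submission
  imports Defs
begin

text \<open>
  The modified recursion is an algebraic rewriting of Newton's method.  Since F is quadratic,
  F(x + w) = F(x) + F'_x w - b(w,w)  and  F'_{x+w} = F'_x - b(w,.) - b(.,w)  hold exactly, so an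
  induction on k shows xi_k = x_k, Mt_k = F'_{x_k}, At_k = -F(x_k) and w_k = x_{k+1} - x_k,
  PROVIDED every Jacobian F'_{x_k} is nonsingular.  The substance of the theorem is that this
  is the case, and we prove more: every F'_{x_k} is a monotone matrix (A v >= 0 implies v >= 0).
\<close>


lemma matvec_component: "(A *v x) $ i = (\<Sum>j\<in>UNIV. A $ i $ j * x $ j)"
  by (simp add: matrix_vector_mult_def)

lemma matvec_neg: "(A :: real^'n^'m) *v (- x) = - (A *v x)"
  by (simp add: vec_eq_iff matrix_vector_mult_def sum_negf)

lemma neg_matvec: "(- A) *v x = - (A *v (x :: real^'n))"
  by (simp add: vec_eq_iff matrix_vector_mult_def sum_negf)

lemma matrix_inv_mult:
  fixes A :: "real^'n^'n"
  assumes "invertible A"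
  shows "A ** matrix_inv A = mat 1" "matrix_inv A ** A = mat 1"
proof -
  have "\<exists>A'. A ** A' = mat 1 \<and> A' ** A = mat 1" using assms invertible_def by blast
  then have "A ** matrix_inv A = mat 1 \<and> matrix_inv A ** A = mat 1"
    unfolding matrix_inv_def by (rule someI_ex)
  then show "A ** matrix_inv A = mat 1" "matrix_inv A ** A = mat 1" by auto
qed

lemma matrix_inv_apply:
  fixes A :: "real^'n^'n"
  assumes "invertible A"
  shows "A *v (matrix_inv A *v y) = y" "matrix_inv A *v (A *v y) = y"
  using matrix_inv_mult[OF assms] by (simp_all add: matrix_vector_mul_assoc)

lemma vle_iff_nonneg_diff: "vle x y \<longleftrightarrow> vnonneg (y - x)"
  by (simp add: vle_def vnonneg_def)

lemma vpos_imp_vnonneg: "vpos x \<Longrightarrow> vnonneg x"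
  by (simp add: vpos_def vnonneg_def less_imp_le)

lemma vnonneg_antisym: "vnonneg x \<Longrightarrow> vnonneg (- x) \<Longrightarrow> x = (0 :: real^'n)"
  by (auto simp: vnonneg_def vec_eq_iff intro: order_antisym)

lemma vnonneg_axis: "vnonneg (axis j (1::real))"
  by (simp add: vnonneg_def axis_def)

lemma matvec_nonneg:
  assumes "\<And>i j. 0 \<le> (L :: real^'n^'m) $ i $ j" "vnonneg x"
  shows "vnonneg (L *v x)"
  using assms unfolding vnonneg_def matvec_component by (auto intro!: sum_nonneg)

lemma sum_nonpos_zero_terms:
  fixes f :: "'a \<Rightarrow> real"
  assumes "finite S" "\<And>j. j \<in> S \<Longrightarrow> f j \<le> 0" "sum f S = 0" "j \<in> S"
  shows "f j = 0"
proof -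
  have "(sum (\<lambda>j. - f j) S = 0) = (\<forall>j\<in>S. - f j = 0)"
    by (rule sum_nonneg_eq_0_iff) (use assms in auto)
  then show ?thesis using assms(3,4) by (simp add: sum_negf)
qed

lemma matvec_row_mono:
  fixes B C :: "real^'n^'n"
  assumes "\<And>j. C $ i $ j \<le> B $ i $ j" "vnonneg l"
  shows "(C *v l) $ i \<le> (B *v l) $ i"
  unfolding matvec_component using assms
  by (intro sum_mono mult_right_mono) (auto simp: vnonneg_def)

lemma row_eq_if_matvec_le:
  fixes B C :: "real^'n^'n"
  assumes le: "\<And>j. C $ i $ j \<le> B $ i $ j" and l: "vpos l" and eq: "(B *v l) $ i \<le> (C *v l) $ i"
  shows "B $ i $ j = C $ i $ j"
proof -
  let ?d = "\<lambda>k. (B$i$k - C$i$k) * l$k"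
  have nn: "0 \<le> ?d k" for k using le l by (simp add: vpos_def less_imp_le)
  have "sum ?d UNIV = (B *v l)$i - (C *v l)$i"
    by (simp add: matvec_component sum_subtractf left_diff_distrib)
  moreover have "0 \<le> sum ?d UNIV" using nn by (simp add: sum_nonneg)
  ultimately have "sum ?d UNIV = 0" using eq by linarith
  then have "?d j = 0" using sum_nonneg_eq_0_iff[of UNIV ?d] nn by simp
  then show ?thesis using l by (auto simp: vpos_def dest: spec[of _ j])
qed

lemma dominated_by_positive:
  fixes v z :: "real^'n"
  assumes v: "vpos v"
  obtains R where "0 < R" "\<And>i. z $ i \<le> R * v $ i"
proof
  define R where "R = (\<Sum>i\<in>UNIV. \<bar>z$i\<bar> / v$i) + 1"
  have vi: "0 < v$i" for i using v by (simp add: vpos_def)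
  have terms: "0 \<le> \<bar>z$i\<bar> / v$i" for i using vi[of i] by simp
  then show "0 < R" unfolding R_def by (simp add: sum_nonneg add_nonneg_pos)
  fix i
  have "\<bar>z$i\<bar> / v$i \<le> (\<Sum>k\<in>UNIV. \<bar>z$k\<bar> / v$k)"
    by (rule member_le_sum) (use terms in auto)
  then have "\<bar>z$i\<bar> / v$i \<le> R" unfolding R_def by linarith
  then have "\<bar>z$i\<bar> \<le> R * v$i" using vi[of i] by (simp add: divide_le_eq)
  then show "z$i \<le> R * v$i" by simp
qed

lemma vpos_perturb:
  fixes v z :: "real^'n"
  assumes "vpos v"
  obtains d where "0 < d" "vpos (v + d *\<^sub>R z)"
proof -
  have "{v :: real^'n. vpos v} = (\<Inter>i\<in>UNIV. {v. v $ i > 0})" by (auto simp: vpos_def)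
  then have "open {v :: real^'n. vpos v}" by (simp add: open_INT open_halfspace_component_gt_cart)
  moreover have "((\<lambda>t. v + t *\<^sub>R z) \<longlongrightarrow> v) (at_right 0)"
    by (auto intro!: tendsto_eq_intros)
  ultimately have "eventually (\<lambda>t. vpos (v + t *\<^sub>R z)) (at_right 0)"
    using assms topological_tendstoD by fastforce
  then obtain c where "0 < c" "\<And>t. 0 < t \<Longrightarrow> t < c \<Longrightarrow> vpos (v + t *\<^sub>R z)"
    unfolding eventually_at_right_field by auto
  then show ?thesis using that[of "c / 2"] by simp
qed


section \<open>Z-matrices and monotone matrices\<close>

text \<open>A Z-matrix has nonpositive off-diagonal entries.  A matrix is monotone (Collatz) if
  A v >= 0 implies v >= 0; the nonsingular M-matrices are exactly the monotone Z-matrices.\<close>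

definition z_matrix :: "real^'n^'n \<Rightarrow> bool" where
  "z_matrix A \<longleftrightarrow> (\<forall>i j. i \<noteq> j \<longrightarrow> A $ i $ j \<le> 0)"

definition monotone_matrix :: "real^'n^'n \<Rightarrow> bool" where
  "monotone_matrix A \<longleftrightarrow> (\<forall>x. vnonneg (A *v x) \<longrightarrow> vnonneg x)"

lemma M_matrix_z_matrix: "M_matrix M \<Longrightarrow> z_matrix M"
  unfolding M_matrix_def z_matrix_def mnonneg_def by (auto simp: mat_def)

lemma transpose_entry: "transpose A $ i $ j = A $ j $ i"
  by (simp add: transpose_def)

lemma z_matrix_transpose: "z_matrix A \<Longrightarrow> z_matrix (transpose A)"
  unfolding z_matrix_def transpose_entry by metis

lemma z_matrix_shift: "z_matrix A \<Longrightarrow> z_matrix (A + e *\<^sub>R mat 1)"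
  unfolding z_matrix_def by (simp add: mat_def)

lemma irreducible_transpose:
  assumes "irreducible_mat (A :: real^'n^'n)"
  shows "irreducible_mat (transpose A)"
  unfolding irreducible_mat_def
proof
  assume "\<exists>I. I \<noteq> {} \<and> I \<noteq> UNIV \<and> (\<forall>i\<in>I. \<forall>j. j \<notin> I \<longrightarrow> transpose A $ i $ j = 0)"
  then obtain I :: "'n set" where I: "I \<noteq> {}" "I \<noteq> UNIV"
    and closed: "\<forall>i\<in>I. \<forall>j. j \<notin> I \<longrightarrow> transpose A $ i $ j = 0" by blast
  have "\<forall>i\<in>- I. \<forall>j. j \<notin> - I \<longrightarrow> A $ i $ j = 0" using closed unfolding transpose_entry by blast
  moreover have "- I \<noteq> {}" "- I \<noteq> UNIV" using I by auto
  ultimately have "\<exists>J. J \<noteq> {} \<and> J \<noteq> UNIV \<and> (\<forall>i\<in>J. \<forall>j. j \<notin> J \<longrightarrow> A $ i $ j = 0)"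
    by (intro exI[of _ "- I"]) simp
  then show False using assms unfolding irreducible_mat_def by simp
qed

lemma z_matrix_matvec_le_diag:
  assumes Z: "z_matrix A" and z: "vnonneg z"
  shows "(A *v z) $ i \<le> A $ i $ i * z $ i"
proof -
  have "(A *v z)$i = A$i$i * z$i + (\<Sum>j\<in>UNIV - {i}. A$i$j * z$j)"
    unfolding matvec_component by (subst sum.remove[of UNIV i]) auto
  also have "(\<Sum>j\<in>UNIV - {i}. A$i$j * z$j) \<le> 0"
    using Z z unfolding z_matrix_def vnonneg_def by (intro sum_nonpos) (auto intro: mult_nonpos_nonneg)
  finally show ?thesis by simp
qed

lemma z_matrix_zero_component:
  assumes Z: "z_matrix A" and y: "vnonneg y" and yi: "y $ i = 0" and Ay: "0 \<le> (A *v y) $ i"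
  shows "(A *v y) $ i = 0 \<and> (\<forall>j. 0 < y $ j \<longrightarrow> A $ i $ j = 0)"
proof -
  let ?d = "\<lambda>j. A$i$j * y$j"
  have nonpos: "?d j \<le> 0" if "j \<in> UNIV - {i}" for j
  proof -
    have "A$i$j \<le> 0" "0 \<le> y$j" using Z y that by (auto simp: z_matrix_def vnonneg_def)
    then show ?thesis by (simp add: mult_nonpos_nonneg)
  qed
  have "(A *v y)$i = A$i$i * y$i + sum ?d (UNIV - {i})"
    unfolding matvec_component by (subst sum.remove[of UNIV i]) auto
  then have Ay_eq: "(A *v y)$i = sum ?d (UNIV - {i})" using yi by simp
  moreover have "sum ?d (UNIV - {i}) \<le> 0" using nonpos by (rule sum_nonpos)
  ultimately have zero: "(A *v y)$i = 0" using Ay by linarith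
  have "A$i$j = 0" if "0 < y$j" for j
  proof -
    have "j \<in> UNIV - {i}" using that yi by auto
    then have "?d j = 0" using sum_nonpos_zero_terms[of "UNIV - {i}" ?d] nonpos zero Ay_eq by auto
    then show ?thesis using that by simp
  qed
  with zero show ?thesis by blast
qed
lemma shift_to_boundary:
  fixes x l :: "real^'n"
  assumes l: "vpos l" and x: "\<not> vnonneg x"
  obtains t i where "0 < t" "vnonneg (x + t *\<^sub>R l)" "(x + t *\<^sub>R l) $ i = 0"
proof -
  define r where "r k = - x$k / l$k" for k
  define t where "t = Max (range r)"
  have lk: "0 < l$k" for k using l by (simp add: vpos_def)
  have tge: "r k \<le> t" for k unfolding t_def by simp
  have "t \<in> range r" unfolding t_def by (rule Max_in) auto
  then obtain i where i: "t = r i" by blast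
  obtain j where "x$j < 0" using x by (auto simp: vnonneg_def not_le)
  then have "0 < r j" using lk[of j] by (simp add: r_def divide_neg_pos)
  then have "0 < t" using tge[of j] by linarith
  moreover have "vnonneg (x + t *\<^sub>R l)" unfolding vnonneg_def
  proof
    fix k
    have "- x$k / l$k \<le> t" using tge[of k] by (simp add: r_def)
    then have "- x$k \<le> t * l$k" by (simp only: pos_divide_le_eq[OF lk[of k]])
    then show "0 \<le> (x + t *\<^sub>R l)$k" by simp
  qed
  moreover have "(x + t *\<^sub>R l) $ i = 0" using i lk[of i] by (simp add: r_def)
  ultimately show ?thesis using that by blast
qed

lemma monotone_matrix_criterion:
  fixes B :: "real^'n^'n" and l :: "real^'n"
  assumes Z: "z_matrix B" and l: "vpos l" and Bl: "vnonneg (B *v l)"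
    and blocks: "\<And>I. I \<noteq> {} \<Longrightarrow> \<forall>i\<in>I. (B *v l)$i = 0 \<and> (\<forall>j. j \<notin> I \<longrightarrow> B$i$j = 0)
                   \<Longrightarrow> I = UNIV \<and> B *v l \<noteq> 0"
  shows "monotone_matrix B"
  unfolding monotone_matrix_def
proof (intro allI impI, rule ccontr)
  fix x assume Bx: "vnonneg (B *v x)" and neg: "\<not> vnonneg x"
  obtain t i0 where t: "0 < t" and y: "vnonneg (x + t *\<^sub>R l)" and yi0: "(x + t *\<^sub>R l) $ i0 = 0"
    using shift_to_boundary[OF l neg] .
  define y where "y = x + t *\<^sub>R l"
  define I where "I = {i. y $ i = 0}"
  have By: "B *v y = B *v x + t *\<^sub>R (B *v l)" unfolding y_def
    by (simp add: matrix_vector_right_distrib matrix_vector_mult_scaleR)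
  have "(B *v l)$i = 0 \<and> (\<forall>j. j \<notin> I \<longrightarrow> B$i$j = 0)" if "i \<in> I" for i
  proof -
    have ge: "0 \<le> (B *v x)$i" "0 \<le> (B *v l)$i" using Bx Bl by (auto simp: vnonneg_def)
    have Byi: "(B *v y)$i = (B *v x)$i + t * (B *v l)$i" using By by simp
    then have "0 \<le> (B *v y)$i" using ge t by simp
    then have zero: "(B *v y)$i = 0 \<and> (\<forall>j. 0 < y$j \<longrightarrow> B$i$j = 0)"
      using z_matrix_zero_component[OF Z] y that by (simp add: I_def y_def)
    have "0 \<le> t * (B *v l)$i" using ge t by simp
    then have "t * (B *v l)$i = 0" using zero Byi ge by linarith
    then have "(B *v l)$i = 0" using t by simp
    moreover have "0 < y$j" if "j \<notin> I" for j
      using that y by (auto simp: I_def y_def vnonneg_def order_less_le)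
    ultimately show ?thesis using zero by blast
  qed
  moreover have "I \<noteq> {}" using yi0 by (auto simp: I_def y_def)
  ultimately have "I = UNIV" and Bl0: "B *v l \<noteq> 0" using blocks by blast+
  then have "\<forall>k. y$k = 0" unfolding I_def by blast
  then have "x = - t *\<^sub>R l" by (simp add: y_def vec_eq_iff add_eq_0_iff2)
  then have "B *v x = - t *\<^sub>R (B *v l)" by (simp add: matvec_neg matrix_vector_mult_scaleR)
  then have "t * (B *v l)$k \<le> 0" for k using Bx by (simp add: vnonneg_def)
  then have "vnonneg (- (B *v l))" using t by (simp add: vnonneg_def mult_le_0_iff)
  then show False using vnonneg_antisym[OF Bl] Bl0 by blast
qed

text \<open>A monotone matrix is nonsingular: A v = 0 forces both v >= 0 and -v >= 0.\<close>
lemma monotone_matrix_invertible: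
  fixes A :: "real^'n^'n"
  assumes "monotone_matrix A"
  shows "invertible A"
proof -
  have "x = 0" if "A *v x = 0" for x
  proof -
    have "vnonneg (A *v x)" "vnonneg (A *v (- x))" using that by (simp_all add: vnonneg_def matvec_neg)
    then have "vnonneg x" "vnonneg (- x)" using assms unfolding monotone_matrix_def by blast+
    then show ?thesis by (rule vnonneg_antisym)
  qed
  then show ?thesis using invertible_left_inverse matrix_left_invertible_ker by blast
qed

lemma monotone_of_positive_vector:
  fixes B :: "real^'n^'n"
  assumes Z: "z_matrix B" and l: "vpos l" and Bl: "vpos (B *v l)"
  shows "monotone_matrix B"
proof (rule monotone_matrix_criterion[OF Z l vpos_imp_vnonneg[OF Bl]])
  fix I :: "'n set"
  assume "I \<noteq> {}" "\<forall>i\<in>I. (B *v l)$i = 0 \<and> (\<forall>j. j \<notin> I \<longrightarrow> B$i$j = 0)"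
  then show "I = UNIV \<and> B *v l \<noteq> 0" using Bl unfolding vpos_def by (metis all_not_in_conv less_irrefl)
qed

text \<open>A Z-matrix B dominating an irreducible C with C l >= 0 for some l > 0 is monotone,
  provided B l /= 0 (irreducibility rules out every proper closed block).\<close>
lemma monotone_of_irreducible_minorant:
  fixes B C :: "real^'n^'n"
  assumes Z: "z_matrix B" and irr: "irreducible_mat C" and le: "\<And>i j. C$i$j \<le> B$i$j"
    and l: "vpos l" and Cl: "vnonneg (C *v l)" and Bl0: "B *v l \<noteq> 0"
  shows "monotone_matrix B"
proof -
  have "(C *v l)$i \<le> (B *v l)$i" for i using matvec_row_mono le vpos_imp_vnonneg[OF l] by blast
  then have "vnonneg (B *v l)" using Cl unfolding vnonneg_def by (meson order_trans)
  then show ?thesis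
  proof (rule monotone_matrix_criterion[OF Z l])
    fix I :: "'n set"
    assume "I \<noteq> {}" and blocks: "\<forall>i\<in>I. (B *v l)$i = 0 \<and> (\<forall>j. j \<notin> I \<longrightarrow> B$i$j = 0)"
    have "C$i$j = 0" if "i \<in> I" "j \<notin> I" for i j
    proof -
      have "(B *v l)$i \<le> (C *v l)$i" using blocks that Cl by (simp add: vnonneg_def)
      then have "B$i$j = C$i$j" using row_eq_if_matvec_le le l by blast
      then show ?thesis using blocks that by simp
    qed
    then have "I = UNIV" using irr \<open>I \<noteq> {}\<close> unfolding irreducible_mat_def by blast
    then show "I = UNIV \<and> B *v l \<noteq> 0" using Bl0 by simp
  qed
qed

lemma positive_test_vector_of_nonneg:
  fixes A :: "real^'n^'n"
  assumes "vnonneg v" "vpos (A *v v)"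
  obtains v' where "vpos v'" "vpos (A *v v')"
proof -
  obtain d where d: "0 < d" "vpos (A *v v + d *\<^sub>R (A *v vec 1))"
    using vpos_perturb[OF assms(2)] by blast
  have "A *v (v + d *\<^sub>R vec 1) = A *v v + d *\<^sub>R (A *v vec 1)"
    by (simp add: matrix_vector_right_distrib matrix_vector_mult_scaleR)
  moreover have "vpos (v + d *\<^sub>R vec 1)"
    using assms(1) d(1) by (simp add: vpos_def vnonneg_def add_nonneg_pos)
  ultimately show ?thesis using that d(2) by metis
qed

lemma positive_test_vector_of_invertible:
  fixes A :: "real^'n^'n"
  assumes "vpos v" "vnonneg (A *v v)" "invertible A"
  obtains v' where "vpos v'" "vpos (A *v v')"
proof -
  define z where "z = matrix_inv A *v vec 1"
  obtain d where d: "0 < d" "vpos (v + d *\<^sub>R z)" using vpos_perturb[OF assms(1)] by blast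
  have "A *v (v + d *\<^sub>R z) = A *v v + d *\<^sub>R vec 1" unfolding z_def
    by (simp add: matrix_vector_right_distrib matrix_vector_mult_scaleR matrix_inv_apply[OF assms(3)])
  then have "vpos (A *v (v + d *\<^sub>R z))"
    using assms(2) d(1) by (simp add: vpos_def vnonneg_def add_nonneg_pos)
  then show ?thesis using that d(2) by blast
qed

lemma monotone_matrix_test_vector:
  fixes A :: "real^'n^'n"
  assumes "monotone_matrix A"
  obtains v where "vpos v" "vpos (A *v v)"
proof -
  have inv: "invertible A" using monotone_matrix_invertible[OF assms] .
  have "A *v (matrix_inv A *v vec 1) = vec 1" using matrix_inv_apply[OF inv] by simp
  then have "vnonneg (matrix_inv A *v vec 1)" "vpos (A *v (matrix_inv A *v vec 1))"
    using assms by (simp_all add: monotone_matrix_def vnonneg_def vpos_def)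
  then show ?thesis using positive_test_vector_of_nonneg that by blast
qed

text \<open>A matrix with an entrywise nonnegative left inverse is monotone; this gives closure of
  monotonicity under transposition.\<close>
lemma monotone_of_nonneg_left_inverse:
  fixes A L :: "real^'n^'n"
  assumes "\<And>i j. 0 \<le> L $ i $ j" "L ** A = mat 1"
  shows "monotone_matrix A"
  unfolding monotone_matrix_def
proof (intro allI impI)
  fix x assume "vnonneg (A *v x)"
  then have "vnonneg (L *v (A *v x))" using matvec_nonneg assms(1) by blast
  then show "vnonneg x" by (simp add: matrix_vector_mul_assoc assms(2))
qed

lemma monotone_matrix_inv_nonneg:
  fixes A :: "real^'n^'n"
  assumes "monotone_matrix A"
  shows "0 \<le> matrix_inv A $ i $ j"
proof -
  have inv: "invertible A" using monotone_matrix_invertible[OF assms] .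
  have "A *v (matrix_inv A *v axis j 1) = axis j 1" using matrix_inv_apply[OF inv] by simp
  then have "vnonneg (matrix_inv A *v axis j 1)"
    using assms vnonneg_axis[of j] unfolding monotone_matrix_def by metis
  then show ?thesis by (simp add: vnonneg_def matrix_vector_mult_basis column_def)
qed

lemma monotone_matrix_transpose:
  fixes A :: "real^'n^'n"
  assumes "monotone_matrix A"
  shows "monotone_matrix (transpose A)"
proof (rule monotone_of_nonneg_left_inverse)
  show "0 \<le> transpose (matrix_inv A) $ i $ j" for i j
    using monotone_matrix_inv_nonneg[OF assms] by (simp add: transpose_def)
  show "transpose (matrix_inv A) ** transpose A = mat 1"
    using matrix_inv_mult(1)[OF monotone_matrix_invertible[OF assms]]
    by (metis matrix_transpose_mul transpose_mat)
qed

lemma monotone_of_entrywise_larger: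
  fixes A B :: "real^'n^'n"
  assumes A: "monotone_matrix A" and Z: "z_matrix B" and le: "\<And>i j. A$i$j \<le> B$i$j"
  shows "monotone_matrix B"
proof -
  obtain v where v: "vpos v" "vpos (A *v v)" using monotone_matrix_test_vector[OF A] .
  have "(A *v v)$i \<le> (B *v v)$i" for i using matvec_row_mono le vpos_imp_vnonneg[OF v(1)] by blast
  then have "vpos (B *v v)" using v(2) unfolding vpos_def by (meson less_le_trans)
  then show ?thesis using monotone_of_positive_vector[OF Z v(1)] by blast
qed

lemma shift_matvec: "(A + e *\<^sub>R mat 1) *v y = A *v y + e *\<^sub>R (y :: real^'n)"
  by (simp add: matrix_vector_mult_add_rdistrib scaleR_matrix_vector_assoc[symmetric])

lemma shifted_solution_close:
  fixes J :: "real^'n^'n"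
  assumes inv: "invertible J" and K: "0 < K" "\<And>u. norm (matrix_inv J *v u) \<le> norm u * K"
    and e: "0 \<le> e" "e * K \<le> 1/2" and y: "(J + e *\<^sub>R mat 1) *v y = J *v x"
  shows "norm (x - y) \<le> 2 * e * K * norm x"
proof -
  have "J *v x = J *v y + e *\<^sub>R y" using y by (simp add: shift_matvec)
  then have "J *v (x - y) = e *\<^sub>R y" by (simp add: matrix_vector_mult_diff_distrib)
  then have "x - y = e *\<^sub>R (matrix_inv J *v y)"
    using matrix_inv_apply(2)[OF inv, of "x - y"] by (simp add: matrix_vector_mult_scaleR)
  then have "norm (x - y) \<le> e * (norm y * K)" using K(2)[of y] e(1) by (simp add: mult_left_mono)
  also have "\<dots> \<le> e * ((norm x + norm (x - y)) * K)"
    using norm_triangle_sub[of y x] e(1) K(1) by (simp add: norm_minus_commute mult_left_mono)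
  finally have "norm (x - y) \<le> e * K * norm x + e * K * norm (x - y)" by (simp add: algebra_simps)
  moreover have "e * K * norm (x - y) \<le> 1/2 * norm (x - y)"
    using mult_right_mono[OF e(2) norm_ge_zero] .
  ultimately show ?thesis by simp
qed

text \<open>A nonsingular matrix whose positive diagonal shifts J + e I are all monotone is monotone:
  otherwise J x >= 0 with x i < 0, while the nonnegative solutions of (J + e I) y = J x tend to x.\<close>
lemma monotone_of_shifts:
  fixes J :: "real^'n^'n"
  assumes inv: "invertible J" and shifts: "\<And>e. 0 < e \<Longrightarrow> monotone_matrix (J + e *\<^sub>R mat 1)"
  shows "monotone_matrix J"
  unfolding monotone_matrix_def
proof (intro allI impI, rule ccontr)
  fix x assume Jx: "vnonneg (J *v x)" and "\<not> vnonneg x"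
  then obtain i where xi: "x$i < 0" by (auto simp: vnonneg_def not_le)
  obtain K where K: "0 < K" "\<And>u. norm (matrix_inv J *v u) \<le> norm u * K"
    using bounded_linear.pos_bounded[OF matrix_vector_mul_bounded_linear] by blast
  define D where "D = 4 * K * (norm x + 1)"
  have D: "0 < D" unfolding D_def using K(1) by (simp add: add_nonneg_pos)
  define e where "e = min (1 / (2 * K)) (- x$i / D)"
  have e0: "0 < e" unfolding e_def using K(1) D xi by (simp add: divide_neg_pos)
  have "e * K \<le> 1 / (2 * K) * K" unfolding e_def using K(1) by (intro mult_right_mono) auto
  then have eK: "e * K \<le> 1/2" using K(1) by simp
  have "e \<le> - x$i / D" unfolding e_def by simp
  then have eD: "e * D \<le> - x$i" by (simp only: pos_le_divide_eq[OF D])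
  have "2 * e * K * norm x \<le> 2 * e * K * (norm x + 1)" using e0 K(1) by simp
  also have "\<dots> = e * D / 2" by (simp add: D_def)
  also have "\<dots> \<le> - x$i / 2" using eD by simp
  finally have close: "2 * e * K * norm x < - x$i" using xi by simp
  define A where "A = J + e *\<^sub>R mat 1"
  have A: "monotone_matrix A" unfolding A_def using shifts e0 by blast
  define y where "y = matrix_inv A *v (J *v x)"
  have Ay: "A *v y = J *v x"
    unfolding y_def using matrix_inv_apply[OF monotone_matrix_invertible[OF A]] by simp
  then have "0 \<le> y$i" using A Jx by (simp add: monotone_matrix_def vnonneg_def)
  moreover have "norm (x - y) \<le> 2 * e * K * norm x"
    using shifted_solution_close[OF inv K less_imp_le[OF e0] eK] Ay by (simp add: A_def)
  moreover have "\<bar>(x - y)$i\<bar> \<le> norm (x - y)" by (rule component_le_norm_cart)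
  ultimately show False using close by simp
qed


section \<open>A theorem of alternatives\<close>

definition unit_simplex :: "(real^'n) set" where
  "unit_simplex = {z. vnonneg z \<and> (\<Sum>i\<in>UNIV. z $ i) = 1}"

lemma axis_in_unit_simplex: "axis j 1 \<in> (unit_simplex :: (real^'n) set)"
  using vnonneg_axis by (simp add: unit_simplex_def axis_def)

lemma unit_simplex_compact: "compact (unit_simplex :: (real^'n) set)"
proof (subst compact_eq_bounded_closed, rule conjI)
  have "unit_simplex \<subseteq> cbox 0 (vec 1 :: real^'n)"
  proof
    fix z :: "real^'n" assume z: "z \<in> unit_simplex"
    have "z$i \<le> 1" for i
      using member_le_sum[of i UNIV "\<lambda>i. z$i"] z by (auto simp: unit_simplex_def vnonneg_def)
    then show "z \<in> cbox 0 (vec 1)" using z unfolding mem_box_cart unit_simplex_def vnonneg_def by auto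
  qed
  then show "bounded (unit_simplex :: (real^'n) set)" using bounded_cbox bounded_subset by blast
next
  have eq: "unit_simplex = {z::real^'n. \<forall>i. 0 \<le> z$i} \<inter> {z. (\<Sum>i\<in>UNIV. z$i) = 1}"
    unfolding unit_simplex_def vnonneg_def by auto
  show "closed (unit_simplex :: (real^'n) set)" unfolding eq
    by (intro closed_Int closed_Collect_all closed_Collect_le closed_Collect_eq continuous_intros)
qed

lemma unit_simplex_convex: "convex (unit_simplex :: (real^'n) set)"
  unfolding convex_def unit_simplex_def vnonneg_def
  by (auto simp: sum.distrib sum_distrib_left[symmetric])

text \<open>Gordan's alternative: either A maps a nonzero nonnegative vector to a nonpositive one, or
  some nonnegative l has A^T l > 0.  If the image of the unit simplex under A misses the
  nonpositive orthant, a separating hyperplane exists and its normal vector is -l.\<close>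
lemma gordan_alternative:
  fixes A :: "real^'n^'n"
  obtains (kernel) z where "vnonneg z" "z \<noteq> 0" "\<And>i. (A *v z)$i \<le> 0"
    | (dual) l where "vnonneg l" "vpos (transpose A *v l)"
proof -
  define T where "T = {t::real^'n. \<forall>i. t$i \<le> 0}"
  define S where "S = (\<lambda>z. A *v z) ` unit_simplex"
  show ?thesis
  proof (cases "S \<inter> T = {}")
    case False
    then obtain z where "z \<in> unit_simplex" "A *v z \<in> T" unfolding S_def by blast
    moreover then have "z \<noteq> 0" by (auto simp: unit_simplex_def)
    ultimately show ?thesis using kernel by (auto simp: unit_simplex_def T_def)
  next
    case True
    have "compact S" unfolding S_def
      by (intro compact_continuous_image unit_simplex_compact linear_continuous_on) simp
    moreover have "convex S" unfolding S_def by (intro convex_linear_image unit_simplex_convex) simp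
    moreover have "S \<noteq> {}" unfolding S_def using axis_in_unit_simplex by blast
    moreover have "closed T" unfolding T_def
      by (intro closed_Collect_all closed_Collect_le continuous_intros)
    moreover have "convex T" unfolding T_def convex_def
      by (auto intro!: add_nonpos_nonpos mult_nonneg_nonpos)
    ultimately obtain c \<beta> where c: "\<forall>s\<in>S. inner c s < \<beta>" "\<forall>t\<in>T. \<beta> < inner c t"
      using separating_hyperplane_compact_closed[of S T] True by blast
    have "0 \<in> T" by (simp add: T_def)
    then have \<beta>: "\<beta> < 0" using c(2) by fastforce
    have ci: "c$i \<le> 0" for i
    proof (rule ccontr)
      assume "\<not> c$i \<le> 0"
      then have "(\<beta> / c$i) *\<^sub>R axis i 1 \<in> T" using \<beta>
        by (auto simp: T_def axis_def divide_neg_pos less_imp_le)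
      then show False using c(2) \<open>\<not> c$i \<le> 0\<close> by (fastforce simp: inner_axis)
    qed
    have "vpos (transpose A *v - c)" unfolding vpos_def
    proof
      fix j
      have "inner c (A *v axis j 1) < \<beta>" using c(1) axis_in_unit_simplex unfolding S_def by blast
      moreover have "inner c (A *v axis j 1) = (\<Sum>i\<in>UNIV. c$i * A$i$j)"
        by (simp add: matrix_vector_mult_basis column_def inner_vec_def)
      moreover have "(transpose A *v - c)$j = - (\<Sum>i\<in>UNIV. c$i * A$i$j)"
        by (simp add: vector_matrix_mult_def sum_negf mult.commute)
      ultimately show "0 < (transpose A *v - c)$j" using \<beta> by simp
    qed
    moreover have "vnonneg (- c)" using ci by (simp add: vnonneg_def)
    ultimately show ?thesis using dual by blast
  qed
qed


section \<open>The quadratic map and its Jacobian\<close>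

lemma Fderiv_apply:
  assumes "bilinear b"
  shows "Fderiv M b x *v y = M *v y - b x y - b y x"
proof -
  have "linear (b x)" "linear (\<lambda>y. b y x)" using assms unfolding bilinear_def by simp_all
  then show ?thesis unfolding Fderiv_def
    by (simp add: matrix_vector_mult_diff_rdistrib matrix_works)
qed

lemma Fderiv_entry: "Fderiv M b x $ i $ j = M$i$j - b x (axis j 1) $ i - b (axis j 1) x $ i"
  by (simp add: Fderiv_def matrix_def)

lemma Fmap_expansion:
  assumes "bilinear b"
  shows "Fmap M a b y = Fmap M a b x + Fderiv M b x *v (y - x) - b (y - x) (y - x)"
proof -
  define d where "d = y - x"
  have y: "y = x + d" unfolding d_def by simp
  show ?thesis unfolding d_def[symmetric] Fderiv_apply[OF assms] Fmap_def y
    by (simp add: bilinear_ladd[OF assms] bilinear_radd[OF assms] matrix_vector_right_distrib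
        algebra_simps)
qed

lemma Fderiv_shift:
  assumes "bilinear b"
  shows "Fderiv M b (x + w) = Fderiv M b x - matrix (b w) - matrix (\<lambda>y. b y w)"
  unfolding Fderiv_def matrix_def
  by (simp add: vec_eq_iff bilinear_ladd[OF assms] bilinear_radd[OF assms] algebra_simps)

lemma Fderiv_zero: "bilinear b \<Longrightarrow> Fderiv M b 0 = M"
  unfolding Fderiv_def matrix_def by (simp add: vec_eq_iff bilinear_lzero bilinear_rzero)

lemma Fmap_zero: "bilinear b \<Longrightarrow> Fmap M a b 0 = - a"
  unfolding Fmap_def by (simp add: bilinear_lzero)



section \<open>A minimal positive solution\<close>

locale qve_minimal =
  fixes M :: "real^'n^'n" and a :: "real^'n" and b :: "real^'n \<Rightarrow> real^'n \<Rightarrow> real^'n"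
    and xs :: "real^'n"
  assumes M_z: "z_matrix M" and M_inv: "invertible M" and a_nonneg: "vnonneg a"
    and bil: "bilinear b" and b_nonneg: "\<And>u v. vnonneg u \<Longrightarrow> vnonneg v \<Longrightarrow> vnonneg (b u v)"
    and minimal: "is_minimal_solution M a b xs" and xs_pos: "vpos xs"
begin

abbreviation J :: "real^'n^'n" where "J \<equiv> Fderiv M b xs"

lemma xs_solution: "M *v xs = a + b xs xs" and xs_nonneg: "vnonneg xs"
  using minimal unfolding is_minimal_solution_def is_solution_def by auto

lemma F_xs: "Fmap M a b xs = 0"
  using xs_solution by (simp add: Fmap_def)

lemma b_component_nonneg: "vnonneg u \<Longrightarrow> vnonneg v \<Longrightarrow> 0 \<le> b u v $ i"
  using b_nonneg vnonneg_def by blast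

lemma b_diag_mono:
  assumes x: "vnonneg x" and xy: "vle x y"
  shows "vle (b x x) (b y y)"
proof -
  have d: "vnonneg (y - x)" using xy by (simp add: vle_iff_nonneg_diff)
  have y: "vnonneg y" using x xy by (auto simp: vle_def vnonneg_def intro: order_trans)
  have "b y y - b x x = b (y - x) y + b x (y - x)"
    by (simp add: bilinear_lsub[OF bil] bilinear_rsub[OF bil])
  moreover have "vnonneg (b (y - x) y + b x (y - x))"
    using b_nonneg[OF d y] b_nonneg[OF x d] by (simp add: vnonneg_def)
  ultimately show ?thesis by (simp add: vle_iff_nonneg_diff)
qed

lemma Fderiv_z_matrix: "vnonneg x \<Longrightarrow> z_matrix (Fderiv M b x)"
  using M_z b_component_nonneg[OF _ vnonneg_axis] b_component_nonneg[OF vnonneg_axis]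
  unfolding z_matrix_def Fderiv_entry by (smt (verit))

lemma Fderiv_antitone:
  assumes x: "vnonneg x" and xy: "vle x y"
  shows "Fderiv M b y $ i $ j \<le> Fderiv M b x $ i $ j"
proof -
  have d: "vnonneg (y - x)" using xy by (simp add: vle_iff_nonneg_diff)
  have "b y (axis j 1) $ i - b x (axis j 1) $ i = b (y - x) (axis j 1) $ i"
    by (simp add: bilinear_lsub[OF bil])
  moreover have "b (axis j 1) y $ i - b (axis j 1) x $ i = b (axis j 1) (y - x) $ i"
    by (simp add: bilinear_rsub[OF bil])
  moreover have "0 \<le> b (y - x) (axis j 1) $ i" "0 \<le> b (axis j 1) (y - x) $ i"
    using b_component_nonneg d vnonneg_axis by auto
  ultimately show ?thesis unfolding Fderiv_entry by linarith
qed

text \<open>M itself is monotone: xs > 0 is a test vector with M xs = a + b(xs,xs) >= 0.\<close>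
lemma M_monotone: "monotone_matrix M"
proof -
  have "vnonneg (M *v xs)" using xs_solution a_nonneg b_nonneg[OF xs_nonneg xs_nonneg]
    by (simp add: vnonneg_def)
  then obtain v where "vpos v" "vpos (M *v v)"
    using positive_test_vector_of_invertible[OF xs_pos _ M_inv] by blast
  then show ?thesis using monotone_of_positive_vector[OF M_z] by blast
qed

text \<open>Every nonnegative supersolution lies above the minimal solution: the map
  x |-> M^-1 (a + b(x,x)) sends the box [0, y] into itself, so by Brouwer it has a fixed point
  there, which is a solution and hence lies above xs.\<close>
lemma supersolution_above:
  assumes y: "vnonneg y" and sup: "vle (a + b y y) (M *v y)"
  shows "vle xs y"
proof -
  define S where "S = cbox 0 y"
  define G where "G = (\<lambda>x. matrix_inv M *v (a + b x x))"
  have memS: "x \<in> S \<longleftrightarrow> vnonneg x \<and> vle x y" for x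
    unfolding S_def mem_box_cart vnonneg_def vle_def by auto
  have bb: "bounded_bilinear b" using bil bilinear_conv_bounded_bilinear by blast
  have cont: "continuous_on S G" unfolding G_def
    by (intro continuous_intros bounded_linear.continuous_on[OF matrix_vector_mul_bounded_linear]
        bounded_bilinear.continuous_on[OF bb])
  have MG: "M *v G x = a + b x x" for x unfolding G_def using matrix_inv_apply[OF M_inv] by simp
  have GS: "G x \<in> S" if "x \<in> S" for x
  proof -
    have x: "vnonneg x" "vle x y" using that memS by auto
    have "vnonneg (M *v G x)" unfolding MG using a_nonneg b_nonneg[OF x(1) x(1)]
      by (simp add: vnonneg_def)
    then have "vnonneg (G x)" using M_monotone monotone_matrix_def by blast
    moreover have "vnonneg (M *v (y - G x))"
      using sup b_diag_mono[OF x] unfolding MG matrix_vector_mult_diff_distrib vle_def vnonneg_def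
      by (smt (verit) vector_add_component vector_minus_component)
    then have "vnonneg (y - G x)" using M_monotone monotone_matrix_def by blast
    ultimately show ?thesis using memS vle_iff_nonneg_diff by blast
  qed
  have "0 \<in> S" using y memS by (simp add: vnonneg_def vle_def)
  then obtain z where z: "z \<in> S" "G z = z"
    using brouwer[of S G] cont GS unfolding S_def by auto
  have "is_solution M a b z" unfolding is_solution_def using z memS MG[of z] by auto
  then have "vle xs z" using minimal is_minimal_solution_def by blast
  then show ?thesis using z memS unfolding vle_def by (meson order_trans)
qed

text \<open>If J z <= -e z with e > 0 and z >= 0, then b(z,z) is bounded by a multiple of -J z:
  componentwise, b(z,z) <= R b(xs,z) <= R (M z - J z) <= R (m z - J z) <= R (m/e + 1) (-J z).\<close>
lemma quadratic_term_bound: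
  assumes e: "0 < e" and z: "vnonneg z" and Jz: "\<And>i. (J *v z)$i \<le> - e * z$i"
  obtains C where "0 < C" "\<And>i. b z z $ i \<le> C * - (J *v z)$i"
proof -
  obtain R where R: "0 < R" "\<And>i. z$i \<le> R * xs$i" using dominated_by_positive[OF xs_pos] by blast
  define m where "m = (\<Sum>i\<in>UNIV. \<bar>M$i$i\<bar>)"
  have m: "0 \<le> m" unfolding m_def by (simp add: sum_nonneg)
  have "b z z $ i \<le> R * (m / e + 1) * - (J *v z)$i" for i
  proof -
    define p where "p = - (J *v z)$i"
    have "e * z$i \<le> p" using Jz[of i] by (simp add: p_def)
    then have zp: "z$i \<le> p / e" using e by (simp add: pos_le_divide_eq mult.commute)
    have "vnonneg (b (R *\<^sub>R xs - z) z)" using b_nonneg z R(2) by (simp add: vnonneg_def)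
    then have b1: "b z z $ i \<le> R * b xs z $ i"
      by (simp add: vnonneg_def bilinear_lsub[OF bil] bilinear_lmul[OF bil])
    have "(J *v z)$i = (M *v z)$i - b xs z $ i - b z xs $ i" by (simp add: Fderiv_apply[OF bil])
    then have "b xs z $ i \<le> (M *v z)$i + p"
      unfolding p_def using b_component_nonneg[OF z xs_nonneg, of i] by linarith
    also have "(M *v z)$i \<le> m * z$i"
    proof -
      have "\<bar>M$i$i\<bar> \<le> m" unfolding m_def by (rule member_le_sum) auto
      then have "M$i$i * z$i \<le> m * z$i" using z by (intro mult_right_mono) (auto simp: vnonneg_def)
      then show ?thesis using z_matrix_matvec_le_diag[OF M_z z, of i] by linarith
    qed
    also have "m * z$i \<le> m * (p / e)" using zp m by (rule mult_left_mono)
    finally have "b xs z $ i \<le> (m / e + 1) * p" by (simp add: algebra_simps)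
    then have "R * b xs z $ i \<le> R * ((m / e + 1) * p)" using R(1) by simp
    then show ?thesis using b1 by (simp add: p_def mult.assoc)
  qed
  moreover have "0 < R * (m / e + 1)" using R(1) m e by (simp add: add_nonneg_pos)
  ultimately show ?thesis using that by blast
qed

text \<open>Key consequence of minimality: J = F'(xs) has no nonzero nonnegative vector with
  J z <= -e z, since otherwise xs - s z would be a smaller nonnegative supersolution.\<close>
lemma no_descent_direction:
  assumes e: "0 < e" and z: "vnonneg z" "z \<noteq> 0" and Jz: "\<And>i. (J *v z)$i \<le> - e * z$i"
  shows False
proof -
  obtain R where R: "0 < R" "\<And>i. z$i \<le> R * xs$i" using dominated_by_positive[OF xs_pos] by blast
  obtain C where C: "0 < C" "\<And>i. b z z $ i \<le> C * - (J *v z)$i"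
    using quadratic_term_bound[OF e z(1) Jz] by blast
  define s where "s = min (1 / R) (1 / C)"
  have s: "0 < s" "s * R \<le> 1" "s * C \<le> 1" using R(1) C(1)
    by (auto simp: s_def min_def field_simps)
  have zi: "0 \<le> z$i" for i using z(1) by (simp add: vnonneg_def)
  define y where "y = xs - s *\<^sub>R z"
  have "vnonneg y" unfolding vnonneg_def y_def
  proof
    fix i
    have "s * z$i \<le> s * R * xs$i" using R(2)[of i] s(1) by (simp add: mult_left_mono mult.assoc)
    also have "\<dots> \<le> 1 * xs$i"
      using mult_right_mono[OF s(2), of "xs$i"] xs_nonneg by (simp add: vnonneg_def)
    finally show "0 \<le> (xs - s *\<^sub>R z)$i" by simp
  qed
  moreover have "vle (a + b y y) (M *v y)"
  proof -
    have Fy: "Fmap M a b y = - s *\<^sub>R (J *v z) - (s * s) *\<^sub>R b z z"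
      using Fmap_expansion[OF bil, of M a y xs] F_xs unfolding y_def
      by (simp add: matrix_vector_mult_scaleR matvec_neg bilinear_lneg[OF bil] bilinear_rneg[OF bil]
          bilinear_lmul[OF bil] bilinear_rmul[OF bil])
    have "0 \<le> Fmap M a b y $ i" for i
    proof -
      define p where "p = - (J *v z)$i"
      have "0 \<le> e * z$i" using e zi[of i] by simp
      then have p: "0 \<le> p" using Jz[of i] by (simp add: p_def)
      have "s * b z z $ i \<le> s * C * p"
        using mult_left_mono[OF C(2)[of i], of s] s(1) by (simp add: p_def mult.assoc)
      also have "\<dots> \<le> 1 * p" using mult_right_mono[OF s(3) p] .
      finally have "s * (s * b z z $ i) \<le> s * p" using s(1) by (simp add: mult_left_mono)
      then show ?thesis unfolding Fy p_def by simp
    qed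
    then show ?thesis by (simp add: vle_def Fmap_def algebra_simps)
  qed
  ultimately have "vle xs y" by (rule supersolution_above)
  then have "s * z$i \<le> 0" for i by (simp add: vle_def y_def)
  then have "vnonneg (- z)" using s(1) by (simp add: vnonneg_def mult_le_0_iff)
  then show False using vnonneg_antisym[OF z(1)] z(2) by blast
qed

lemma no_negative_image:
  assumes z: "vnonneg z" and neg: "\<And>i. (J *v z)$i < 0"
  shows False
proof -
  have "z \<noteq> 0" using neg[of undefined] by auto
  define \<mu> where "\<mu> = Min (range (\<lambda>i. - (J *v z)$i))"
  have \<mu>: "0 < \<mu>" "\<And>i. \<mu> \<le> - (J *v z)$i" unfolding \<mu>_def using neg by (auto simp: Min_gr_iff)
  obtain R where R: "0 < R" "\<And>i. z$i \<le> R * 1"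
    using dominated_by_positive[of "vec 1" z] by (auto simp: vpos_def)
  have "(J *v z)$i \<le> - (\<mu> / R) * z$i" for i
  proof -
    have "(\<mu> / R) * z$i \<le> (\<mu> / R) * (R * 1)"
      using mult_left_mono[OF R(2)[of i], of "\<mu> / R"] \<mu>(1) R(1) by simp
    then show ?thesis using \<mu>(2)[of i] R(1) by simp
  qed
  then show False using no_descent_direction[of "\<mu> / R" z] \<mu>(1) R(1) z \<open>z \<noteq> 0\<close> by simp
qed

text \<open>The shifted Jacobians J + e I, e > 0, are monotone: by Gordan's alternative, the only
  other option is a descent direction for J.\<close>
lemma J_shift_monotone:
  assumes e: "0 < e"
  shows "monotone_matrix (J + e *\<^sub>R mat 1)"
proof (cases rule: gordan_alternative[of "J + e *\<^sub>R mat 1"])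
  case (kernel z)
  have "(J *v z)$i \<le> - e * z$i" for i
  proof -
    have "(J *v z)$i + e * z$i \<le> 0" using kernel(3)[of i] by (simp add: shift_matvec)
    then show ?thesis by linarith
  qed
  then show ?thesis using no_descent_direction[OF e kernel(1,2)] by blast
next
  case (dual l)
  let ?A = "J + e *\<^sub>R mat 1"
  have Z: "z_matrix (transpose ?A)" using Fderiv_z_matrix[OF xs_nonneg]
    by (intro z_matrix_transpose z_matrix_shift)
  obtain v where "vpos v" "vpos (transpose ?A *v v)"
    using positive_test_vector_of_nonneg[OF dual] by blast
  then have "monotone_matrix (transpose ?A)" using monotone_of_positive_vector[OF Z] by blast
  then show ?thesis using monotone_matrix_transpose by fastforce
qed

lemma J_invertible_monotone: "invertible J \<Longrightarrow> monotone_matrix J"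
  using monotone_of_shifts J_shift_monotone by blast

lemma J_left_vector:
  obtains l where "vnonneg l" "l \<noteq> 0" "vnonneg (transpose J *v l)"
proof (cases rule: gordan_alternative[of "- transpose J"])
  case (kernel z)
  have "(- transpose J) *v z = - (transpose J *v z)" by (rule neg_matvec)
  then show ?thesis using kernel that by (simp add: vnonneg_def)
next
  case (dual l)
  have "transpose (- transpose J) = - J" by (simp add: vec_eq_iff transpose_entry)
  then have "transpose (- transpose J) *v l = - (J *v l)" by (simp add: neg_matvec)
  then show ?thesis using no_negative_image[of l] dual by (simp add: vpos_def)
qed

lemma J_singular_positive_kernel:
  assumes sing: "\<not> invertible J" and irr: "irreducible_mat J"
  obtains l where "vpos l" "transpose J *v l = 0"
proof -
  obtain l where l: "vnonneg l" "l \<noteq> 0" "vnonneg (transpose J *v l)" using J_left_vector by blast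
  let ?C = "transpose J"
  have ZC: "z_matrix ?C" using z_matrix_transpose[OF Fderiv_z_matrix[OF xs_nonneg]] .
  have irrC: "irreducible_mat ?C" using irreducible_transpose[OF irr] .
  define I where "I = {i. l$i = 0}"
  have "?C$i$j = 0" if "i \<in> I" "j \<notin> I" for i j
  proof -
    have "0 \<le> (?C *v l)$i" using l(3) by (simp add: vnonneg_def)
    moreover have "0 < l$j" using that l(1) by (auto simp: I_def vnonneg_def order_less_le)
    ultimately show ?thesis using z_matrix_zero_component[OF ZC l(1)] that by (simp add: I_def)
  qed
  moreover have "I \<noteq> UNIV" using l(2) by (auto simp: I_def vec_eq_iff)
  ultimately have "I = {}" using irrC unfolding irreducible_mat_def by blast
  then have lpos: "vpos l" using l(1) by (auto simp: I_def vpos_def vnonneg_def order_less_le)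
  have "?C *v l = 0"
  proof (rule ccontr)
    assume "?C *v l \<noteq> 0"
    then have "monotone_matrix ?C"
      using monotone_of_irreducible_minorant[OF ZC irrC _ lpos l(3)] by blast
    then have "invertible (transpose ?C)" using monotone_matrix_transpose monotone_matrix_invertible by blast
    with sing show False by simp
  qed
  with lpos that show ?thesis by blast
qed

text \<open>Under the singular alternative of (H), the Newton step cannot land on xs from a point
  x /= xs with F(x) <= 0 if b(xs - x, xs - x) = 0: then -F(x) = J (xs - x) would be orthogonal
  to the positive left kernel vector of J, forcing F(x) = 0, i.e. x would be a solution below xs.\<close>
lemma singular_root_not_reached:
  assumes sing: "\<not> invertible J" "irreducible_mat J"
    and x: "vnonneg x" "vle x xs" "vnonneg (- Fmap M a b x)"
    and flat: "b (xs - x) (xs - x) = 0"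
  shows "x = xs"
proof -
  obtain l where l: "vpos l" "transpose J *v l = 0" using J_singular_positive_kernel[OF sing] .
  have "Fmap M a b x = Fmap M a b xs + J *v (x - xs) - b (x - xs) (x - xs)"
    by (rule Fmap_expansion[OF bil])
  moreover have "b (x - xs) (x - xs) = b (xs - x) (xs - x)"
    using bilinear_lneg[OF bil] bilinear_rneg[OF bil] by (metis minus_diff_eq minus_minus)
  moreover have "J *v (x - xs) = - (J *v (xs - x))" by (metis matvec_neg minus_diff_eq)
  ultimately have "- Fmap M a b x = J *v (xs - x)" using F_xs flat by simp
  then have "inner l (- Fmap M a b x) = 0"
    using l(2) by (metis dot_lmul_matrix inner_zero_left transpose_matrix_vector)
  then have "(\<Sum>i\<in>UNIV. l$i * (- Fmap M a b x)$i) = 0" by (simp add: inner_vec_def)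
  moreover have "0 \<le> l$i * (- Fmap M a b x)$i" for i
    using l(1) x(3) unfolding vpos_def vnonneg_def by (meson less_imp_le mult_nonneg_nonneg)
  ultimately have "l$i * (- Fmap M a b x)$i = 0" for i
    using sum_nonneg_eq_0_iff[of UNIV "\<lambda>i. l$i * (- Fmap M a b x)$i"] by simp
  then have "Fmap M a b x = 0" using l(1) by (simp add: vpos_def vec_eq_iff) (metis less_irrefl)
  then have "is_solution M a b x" using x(1) by (simp add: is_solution_def Fmap_def algebra_simps)
  then have "vle xs x" using minimal is_minimal_solution_def by blast
  then show ?thesis using x(2) by (auto simp: vle_def vec_eq_iff intro: order_antisym)
qed

end


section \<open>Newton's method under hypothesis (H)\<close>

locale qve_nondegenerate = qve_minimal +
  assumes nondegenerate: "invertible (Fderiv M b xs) \<or>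
    (irreducible_mat (Fderiv M b xs) \<and>
     (\<forall>y. vnonneg y \<and> vle y xs \<and> y \<noteq> xs \<longrightarrow> Fderiv M b y \<noteq> Fderiv M b xs))"
begin

text \<open>Under (H), F'(x) is monotone for 0 <= x <= xs, excluding x = xs in the singular case:
  either J is monotone and F'(x) >= J entrywise, or F'(x)^T strictly dominates the irreducible
  J^T somewhere along its positive kernel vector.\<close>
lemma Fderiv_monotone:
  assumes x: "vnonneg x" "vle x xs" and ne: "invertible J \<or> x \<noteq> xs"
  shows "monotone_matrix (Fderiv M b x)"
proof (cases "invertible J")
  case True
  then show ?thesis using monotone_of_entrywise_larger[OF J_invertible_monotone Fderiv_z_matrix[OF x(1)]]
      Fderiv_antitone[OF x] by blast
next
  case False
  with nondegenerate ne x have irr: "irreducible_mat J" and dist: "Fderiv M b x \<noteq> J" by auto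
  obtain l where l: "vpos l" "transpose J *v l = 0" using J_singular_positive_kernel[OF False irr] .
  let ?B = "transpose (Fderiv M b x)" and ?C = "transpose J"
  have le: "?C$i$j \<le> ?B$i$j" for i j unfolding transpose_entry using Fderiv_antitone[OF x] .
  have "?B *v l \<noteq> 0"
  proof
    assume "?B *v l = 0"
    then have "?B$i$j = ?C$i$j" for i j using row_eq_if_matvec_le[OF le l(1)] l(2) by simp
    then have "?B = ?C" by (simp add: vec_eq_iff)
    then show False using dist by (metis transpose_transpose)
  qed
  then have "monotone_matrix ?B"
    using monotone_of_irreducible_minorant[OF z_matrix_transpose[OF Fderiv_z_matrix[OF x(1)]]
        irreducible_transpose[OF irr] le l(1)] l(2) by (simp add: vnonneg_def)
  then show ?thesis using monotone_matrix_transpose by fastforce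
qed

definition newton_admissible where
  "newton_admissible x \<longleftrightarrow>
     vnonneg x \<and> vle x xs \<and> vnonneg (- Fmap M a b x) \<and> (invertible J \<or> x \<noteq> xs)"

lemma newton_start: "newton_admissible 0"
proof -
  have "xs \<noteq> 0" using xs_pos by (auto simp: vpos_def)
  then show ?thesis using a_nonneg xs_nonneg
    by (simp add: newton_admissible_def Fmap_zero[OF bil] vnonneg_def vle_def)
qed

text \<open>With w = x' - x and u = xs - x the exact
  expansion gives F'(x) w = -F(x) >= 0, F'(x)(xs - x') = b(u,u) >= 0 and -F(x') = b(w,w) >= 0;
  monotonicity of F'(x) turns the first two into x <= x' <= xs.\<close>
lemma newton_step:
  assumes x: "newton_admissible x" and step: "Fderiv M b x *v (x' - x) = - Fmap M a b x"
  shows "newton_admissible x'"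
proof -
  have x0: "vnonneg x" and xle: "vle x xs" and Fx: "vnonneg (- Fmap M a b x)"
    and ne: "invertible J \<or> x \<noteq> xs"
    using x unfolding newton_admissible_def by auto
  have G: "monotone_matrix (Fderiv M b x)" using Fderiv_monotone[OF x0 xle ne] .
  define w where "w = x' - x"
  define u where "u = xs - x"
  have w: "vnonneg w" using G Fx step unfolding monotone_matrix_def w_def by metis
  have u: "vnonneg u" using xle unfolding u_def by (simp add: vle_iff_nonneg_diff)
  have "Fmap M a b xs = Fmap M a b x + Fderiv M b x *v u - b u u"
    unfolding u_def by (rule Fmap_expansion[OF bil])
  moreover have "Fderiv M b x *v (xs - x') = Fderiv M b x *v u - Fderiv M b x *v (x' - x)"
    unfolding u_def by (simp add: matrix_vector_mult_diff_distrib)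
  ultimately have Fxs: "Fderiv M b x *v (xs - x') = b u u"
    using step F_xs by (simp add: algebra_simps)
  then have x'le: "vle x' xs"
    using G b_nonneg[OF u u] unfolding monotone_matrix_def by (simp add: vle_iff_nonneg_diff)
  have "Fmap M a b x' = Fmap M a b x + Fderiv M b x *v w - b w w"
    unfolding w_def by (rule Fmap_expansion[OF bil])
  then have "- Fmap M a b x' = b w w" using step unfolding w_def by simp
  then have Fx': "vnonneg (- Fmap M a b x')" using b_nonneg[OF w w] by simp
  have x'0: "vnonneg x'" using x0 w unfolding w_def vnonneg_def
    by (metis add_nonneg_nonneg diff_add_cancel vector_add_component)
  have "invertible J \<or> x' \<noteq> xs"
  proof (rule ccontr)
    assume "\<not> (invertible J \<or> x' \<noteq> xs)"
    then have sing: "\<not> invertible J" and x': "x' = xs" by auto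
    then have "b u u = 0" using Fxs by simp
    moreover have "irreducible_mat J" using nondegenerate sing by blast
    ultimately have "x = xs" using singular_root_not_reached[OF sing _ x0 xle Fx] unfolding u_def by blast
    with ne sing show False by simp
  qed
  then show ?thesis using x'0 x'le Fx' by (simp add: newton_admissible_def)
qed

lemma newton_jacobians_monotone:
  assumes x0: "x 0 = 0" and step: "\<And>k. Fderiv M b (x k) *v (x (Suc k) - x k) = - Fmap M a b (x k)"
  shows "monotone_matrix (Fderiv M b (x k))"
proof -
  have "newton_admissible (x k)"
  proof (induction k)
    case 0
    then show ?case using newton_start x0 by simp
  next
    case (Suc k)
    then show ?case using newton_step step by blast
  qed
  then show ?thesis using Fderiv_monotone unfolding newton_admissible_def by blast
qed

end


section \<open>The modified recursion\<close>

lemma modified_recursion_tracks_newton: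
  fixes M :: "real^'n^'n" and a :: "real^'n" and b :: "real^'n \<Rightarrow> real^'n \<Rightarrow> real^'n"
    and x xi w :: "nat \<Rightarrow> real^'n" and Mt :: "nat \<Rightarrow> real^'n^'n" and At :: "nat \<Rightarrow> real^'n"
  assumes bil: "bilinear b" and inv: "\<And>k. invertible (Fderiv M b (x k))"
    and hx0: "x 0 = 0"
    and hx: "\<And>k. Fderiv M b (x k) *v (x (Suc k) - x k) = - Fmap M a b (x k)"
    and hxi0: "xi 0 = 0" and hMt0: "Mt 0 = M" and hat0: "At 0 = a"
    and hw: "\<And>k. w k = matrix_inv (Mt k) *v At k"
    and hxi: "\<And>k. xi (Suc k) = xi k + w k"
    and hat: "\<And>k. At (Suc k) = b (w k) (w k)"
    and hMt: "\<And>k. Mt (Suc k) = Mt k - matrix (b (w k)) - matrix (\<lambda>y. b y (w k))"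
  shows "xi k = x k \<and> Mt k = Fderiv M b (x k) \<and> At k = - Fmap M a b (x k)
         \<and> w k = x (Suc k) - x k"
proof -
  have step: "w k = x (Suc k) - x k"
    if "Mt k = Fderiv M b (x k)" "At k = - Fmap M a b (x k)" for k
  proof -
    have "w k = matrix_inv (Fderiv M b (x k)) *v (Fderiv M b (x k) *v (x (Suc k) - x k))"
      using hw[of k] that hx[of k] by simp
    then show ?thesis using matrix_inv_apply(2)[OF inv] by simp
  qed
  show ?thesis
  proof (induction k)
    case 0
    then show ?case using hxi0 hMt0 hat0 hx0 Fderiv_zero[OF bil] Fmap_zero[OF bil] step by simp
  next
    case (Suc k)
    then have wk: "w k = x (Suc k) - x k" and xk: "x (Suc k) = x k + w k" by simp_all
    have "Fmap M a b (x (Suc k)) = Fmap M a b (x k) + Fderiv M b (x k) *v w k - b (w k) (w k)"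
      using Fmap_expansion[OF bil, of M a "x (Suc k)" "x k"] wk by simp
    then have At: "At (Suc k) = - Fmap M a b (x (Suc k))" using hat[of k] hx[of k] wk by simp
    have Mt: "Mt (Suc k) = Fderiv M b (x (Suc k))"
      using hMt[of k] Suc unfolding xk Fderiv_shift[OF bil] by simp
    have "xi (Suc k) = x (Suc k)" using hxi[of k] Suc by simp
    with At Mt show ?case using step by blast
  qed
qed


theorem mainTheorem13:
  fixes M :: "real^'n^'n" and a :: "real^'n" and b :: "real^'n \<Rightarrow> real^'n \<Rightarrow> real^'n"
    and x xi w :: "nat \<Rightarrow> real^'n" and Mt :: "nat \<Rightarrow> real^'n^'n" and At :: "nat \<Rightarrow> real^'n"
  assumes hM: "M_matrix M" "invertible M"
    and ha: "vnonneg a"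
    and hb: "bilinear b" "\<And>u v. vnonneg u \<Longrightarrow> vnonneg v \<Longrightarrow> vnonneg (b u v)"
    and hH: "hypH M a b"
    and hx0: "x 0 = 0"
    and hx: "\<And>k. Fderiv M b (x k) *v (x (Suc k) - x k) = - Fmap M a b (x k)"
    and hxi0: "xi 0 = 0" and hMt0: "Mt 0 = M" and hat0: "At 0 = a"
    and hw: "\<And>k. w k = matrix_inv (Mt k) *v At k"
    and hxi: "\<And>k. xi (Suc k) = xi k + w k"
    and hat: "\<And>k. At (Suc k) = b (w k) (w k)"
    and hMt: "\<And>k. Mt (Suc k) = Mt k - matrix (b (w k)) - matrix (\<lambda>y. b y (w k))"
  shows "\<forall>k. invertible (Mt k) \<and> xi k = x k \<and> Mt k = Fderiv M b (x k)
           \<and> At k = - Fmap M a b (x k) \<and> w k = x (Suc k) - x k"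
proof -
  obtain xs where "qve_nondegenerate M a b xs"
    using hH M_matrix_z_matrix[OF hM(1)] hM(2) ha hb
    unfolding hypH_def qve_nondegenerate_def qve_minimal_def qve_nondegenerate_axioms_def by blast
  then have inv: "invertible (Fderiv M b (x k))" for k
    using qve_nondegenerate.newton_jacobians_monotone[OF _ hx0 hx] monotone_matrix_invertible by blast
  have "xi k = x k \<and> Mt k = Fderiv M b (x k) \<and> At k = - Fmap M a b (x k) \<and> w k = x (Suc k) - x k"
    for k using modified_recursion_tracks_newton[OF hb(1) inv hx0 hx hxi0 hMt0 hat0 hw hxi hat hMt] .
  then show ?thesis using inv by simp
qed

end
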